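(* Let $\mathbf{U}$ and $\mathbf{V}$ be group varieties with $\mathbf{U}\subseteq\mathbf{V}$. Then every finite connected directed graph $\Gamma$ that has property $\mathrm{P}(\mathbf{U})$ also has property $\mathrm{P}(\mathbf{V})$.
   Context: All graphs are finite directed graphs, possibly with loops and multiple edges. A graph $\Gamma$ has vertex set $V(\Gamma)$ and edge set $E(\Gamma)$, and each edge $e$ has an initial vertex $\iota e$ and a terminal vertex $\tau e$. A subgraph is regarded as a set of vertices and edges (containing the endpoints of its edges); unions and intersections of subgraphs are taken as sets of vertices and edges. Connectedness refers to the underlying undirected graph. Let $\overline{\Gamma}$ be the graph with vertex set $V(\Gamma)$ and edge set $E(\Gamma)\sqcup E(\Gamma)^{-1}$, where for $e\in E(\Gamma)$ the formal edge $e^{-1}$ goes from $\tau e$ to $\iota e$. A path $p$ in $\overline{\Gamma}$ is either an empty path at a vertex or a sequence $e_1\cdots e_n$ of edges of $\overline{\Gamma}$ with $\tau e_i=\iota e_{i+1}$; it has initial vertex $\iota p$ and terminal vertex $\tau p$, and is regarded as a word over the alphabet $E(\Gamma)\cup E(\Gamma)^{-1}$. The span $\langle p\rangle$ is the subgraph of $\Gamma$ consisting of the vertices traversed by $p$ and the edges $e\in E(\Gamma)$ such that $e$ or $e^{-1}$ occurs in $p$. For a group variety $\mathbf{U}$ and words $u,v$ over $X\cup X^{-1}$, write $u\equiv_{\mathbf U} v$ if $u$ and $v$ represent the same element of the relatively free group of $\mathbf U$ on $X$ (i.e. the identity $u=v$ holds in $\mathbf U$), and $[u]_{\mathbf U}$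 for the class of $u$. The free $g\mathbf U$-category on $\Gamma$ has vertex set $V(\Gamma)$; its arrows from $i$ to $j$ are the triples $(i,[p]_{\mathbf U},j)$ with $p$ an $(i,j)$-path in $\overline\Gamma$, and $(i,[p]_{\mathbf U},j)(j,[q]_{\mathbf U},k)=(i,[pq]_{\mathbf U},k)$; for an arrow $x=(i,[p]_{\mathbf U},j)$ put $\iota x=i$, $\tau x=j$. For each arrow $x$ define subgraphs of $\Gamma$: $C_0(x)=\bigcap\{\langle p\rangle : p \text{ a path in }\overline\Gamma \text{ with } (\iota p,[p]_{\mathbf U},\tau p)=x\}$; $P_n(x)$ is the connected component of $C_n(x)$ containing $\iota x$; $C_{n+1}(x)=\bigcap\{P_n(x_1)\cup\cdots\cup P_n(x_k) : k\ge 1,\ x_1,\dots,x_k \text{ arrows with } x_1\cdots x_k=x\}$; and $P(x)=\bigcap_{n\ge 0}P_n(x)$. A connected graph $\Gamma$ has property $\mathrm{P}(\mathbf U)$ if $\tau x\in P(x)$ for every arrow $x$ of the free $g\mathbf U$-category on $\Gamma$. *)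

theory Defs
  imports Main "Graph_Theory.Digraph" "Graph_Theory.Digraph_Component"
begin

text \<open>A word over the alphabet X \<union> X^-1 is a list of pairs (x, b):
  (x, True) stands for the letter x, (x, False) for its formal inverse.\<close>
type_synonym 'x word = "('x \<times> bool) list"

definition inv_word :: "'x word \<Rightarrow> 'x word" where
  "inv_word w = rev (map (\<lambda>(x, b). (x, \<not> b)) w)"

definition subst_word :: "('x \<Rightarrow> 'y word) \<Rightarrow> 'x word \<Rightarrow> 'y word" where
  "subst_word \<sigma> w = concat (map (\<lambda>(x, b). if b then \<sigma> x else inv_word (\<sigma> x)) w)"

text \<open>A group variety is represented (Birkhoff) by its set of laws: the set of all
  identities u = v, with u, v words over countably many variables (nat), which hold in
  every group of the variety.  These sets are exactly the fully invariant congruences of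
  the free monoid on nat \<union> nat^-1 that contain the free-group cancellation relations,
  i.e. the fully invariant normal subgroups of the free group of countable rank.\<close>
type_synonym laws = "(nat word \<times> nat word) set"

definition group_variety :: "laws \<Rightarrow> bool" where
  "group_variety L \<longleftrightarrow>
     (\<forall>u. (u, u) \<in> L) \<and>
     (\<forall>u v. (u, v) \<in> L \<longrightarrow> (v, u) \<in> L) \<and>
     (\<forall>u v w. (u, v) \<in> L \<longrightarrow> (v, w) \<in> L \<longrightarrow> (u, w) \<in> L) \<and>
     (\<forall>u v a c. (u, v) \<in> L \<longrightarrow> (a @ u @ c, a @ v @ c) \<in> L) \<and>
     (\<forall>x b. ([(x, b), (x, \<not> b)], []) \<in> L) \<and>
     (\<forall>\<sigma> u v. (u, v) \<in> L \<longrightarrow> (subst_word \<sigma> u, subst_word \<sigma> v) \<in> L)"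

text \<open>Inclusion of varieties U \<subseteq> V (as classes of groups) corresponds to the reverse
  inclusion of their sets of laws.\<close>
definition subvariety :: "laws \<Rightarrow> laws \<Rightarrow> bool" where
  "subvariety U V \<longleftrightarrow> V \<subseteq> U"

text \<open>u \<equiv>_U v for words over an arbitrary alphabet X: the identity u = v holds in U,
  i.e. every substitution instance of it (into words over nat) is a law of U.\<close>
definition word_equiv :: "laws \<Rightarrow> 'x word \<Rightarrow> 'x word \<Rightarrow> bool" where
  "word_equiv L u v \<longleftrightarrow> (\<forall>\<sigma> :: 'x \<Rightarrow> nat word. (subst_word \<sigma> u, subst_word \<sigma> v) \<in> L)"

definition dstart :: "('v, 'e) pre_digraph \<Rightarrow> 'e \<times> bool \<Rightarrow> 'v" where
  "dstart G x = (if snd x then tail G (fst x) else head G (fst x))"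

definition dend :: "('v, 'e) pre_digraph \<Rightarrow> 'e \<times> bool \<Rightarrow> 'v" where
  "dend G x = (if snd x then head G (fst x) else tail G (fst x))"

fun is_gpath :: "('v, 'e) pre_digraph \<Rightarrow> 'v \<Rightarrow> 'e word \<Rightarrow> 'v \<Rightarrow> bool" where
  "is_gpath G i [] j \<longleftrightarrow> i \<in> verts G \<and> i = j"
| "is_gpath G i (x # xs) j \<longleftrightarrow> fst x \<in> arcs G \<and> dstart G x = i \<and> is_gpath G (dend G x) xs j"

type_synonym ('v, 'e) subgraph = "'v set \<times> 'e set"

definition span :: "('v, 'e) pre_digraph \<Rightarrow> 'v \<Rightarrow> 'e word \<Rightarrow> ('v, 'e) subgraph" where
  "span G i p = (insert i (dend G ` set p), fst ` set p)"

definition sg_Inter :: "('v, 'e) subgraph set \<Rightarrow> ('v, 'e) subgraph" where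
  "sg_Inter S = (\<Inter> (fst ` S), \<Inter> (snd ` S))"

definition sg_Union :: "('v, 'e) subgraph set \<Rightarrow> ('v, 'e) subgraph" where
  "sg_Union S = (\<Union> (fst ` S), \<Union> (snd ` S))"

text \<open>Connected component of the subgraph H containing vertex i (empty if i \<notin> H);
  connectivity in the underlying undirected graph.\<close>
definition sg_comp :: "('v, 'e) pre_digraph \<Rightarrow> ('v, 'e) subgraph \<Rightarrow> 'v \<Rightarrow> ('v, 'e) subgraph" where
  "sg_comp G H i =
     (let adj = (\<Union>e\<in>snd H. {(tail G e, head G e), (head G e, tail G e)});
          W = {v. i \<in> fst H \<and> v \<in> fst H \<and> (i, v) \<in> adj\<^sup>*}
      in (W, {e \<in> snd H. tail G e \<in> W \<and> head G e \<in> W}))"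

text \<open>An arrow (i, [p]_U, j) is represented by any triple (i, p, j) with is_gpath G i p j.\<close>

definition C0 :: "laws \<Rightarrow> ('v, 'e) pre_digraph \<Rightarrow> 'v \<times> 'e word \<times> 'v \<Rightarrow> ('v, 'e) subgraph" where
  "C0 U G x = (case x of (i, p, j) \<Rightarrow>
      sg_Inter {span G i q | q. is_gpath G i q j \<and> word_equiv U q p})"

text \<open>Factorisations x = x_1 \<cdots> x_k (k \<ge> 1) of the arrow (i,p,j), as lists of representing
  triples.\<close>
fun chain :: "('v, 'e) pre_digraph \<Rightarrow> 'v \<Rightarrow> ('v \<times> 'e word \<times> 'v) list \<Rightarrow> 'v \<Rightarrow> bool" where
  "chain G i [] j \<longleftrightarrow> i = j"
| "chain G i ((a, q, b) # ys) j \<longleftrightarrow> a = i \<and> is_gpath G a q b \<and> chain G b ys j"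

definition factorization :: "laws \<Rightarrow> ('v, 'e) pre_digraph \<Rightarrow> 'v \<times> 'e word \<times> 'v
    \<Rightarrow> ('v \<times> 'e word \<times> 'v) list \<Rightarrow> bool" where
  "factorization U G x ys = (case x of (i, p, j) \<Rightarrow>
      ys \<noteq> [] \<and> chain G i ys j \<and> word_equiv U (concat (map (\<lambda>y. fst (snd y)) ys)) p)"

fun Cn :: "laws \<Rightarrow> ('v, 'e) pre_digraph \<Rightarrow> nat \<Rightarrow> 'v \<times> 'e word \<times> 'v \<Rightarrow> ('v, 'e) subgraph" where
  "Cn U G 0 x = C0 U G x"
| "Cn U G (Suc n) x =
     sg_Inter {sg_Union ((\<lambda>y. sg_comp G (Cn U G n y) (fst y)) ` set ys) | ys. factorization U G x ys}"

definition Pn :: "laws \<Rightarrow> ('v, 'e) pre_digraph \<Rightarrow> nat \<Rightarrow> 'v \<times> 'e word \<times> 'v \<Rightarrow> ('v, 'e) subgraph" where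
  "Pn U G n x = sg_comp G (Cn U G n x) (fst x)"

definition Pinf :: "laws \<Rightarrow> ('v, 'e) pre_digraph \<Rightarrow> 'v \<times> 'e word \<times> 'v \<Rightarrow> ('v, 'e) subgraph" where
  "Pinf U G x = sg_Inter (range (\<lambda>n. Pn U G n x))"

definition property_P :: "laws \<Rightarrow> ('v, 'e) pre_digraph \<Rightarrow> bool" where
  "property_P U G \<longleftrightarrow> connected G \<and>
     (\<forall>i p j. is_gpath G i p j \<longrightarrow> j \<in> fst (Pinf U G (i, p, j)))"

end

theory Submission
  imports Defs "HOL-Library.Product_Order"
begin

text \<open>Enlarging the set of laws can only identify more paths and allow more factorisations,
  so every intersection defining C_n, P_n and P ranges over more subgraphs and shrinks.
  Hence P_U(x) \<subseteq> P_V(x) for every arrow when U \<subseteq> V, and the target vertex of x,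
  lying in P_U(x), lies in P_V(x).\<close>

lemma sg_Inter_eq_Inf: "sg_Inter S = Inf S"
  by (simp add: sg_Inter_def Inf_prod_def)

lemma sg_Union_eq_Sup: "sg_Union S = Sup S"
  by (simp add: sg_Union_def Sup_prod_def)

lemma sg_comp_mono:
  assumes "H \<le> H'"
  shows "sg_comp G H i \<le> sg_comp G H' i"
proof -
  let ?adj = "\<lambda>H. \<Union>e\<in>snd H. {(tail G e, head G e), (head G e, tail G e)}"
  have "?adj H \<subseteq> ?adj H'"
    using assms by (auto simp: less_eq_prod_def)
  then have "(?adj H)\<^sup>* \<subseteq> (?adj H')\<^sup>*"
    by (rule rtrancl_mono)
  then show ?thesis
    using assms by (auto simp: sg_comp_def Let_def less_eq_prod_def)
qed

lemma word_equiv_subvariety: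
  "subvariety U V \<Longrightarrow> word_equiv V q p \<Longrightarrow> word_equiv U q p"
  by (auto simp: subvariety_def word_equiv_def)

lemma factorization_subvariety:
  "subvariety U V \<Longrightarrow> factorization V G x ys \<Longrightarrow> factorization U G x ys"
  by (auto simp: factorization_def word_equiv_subvariety split: prod.splits)

lemma Cn_subvariety_le:
  assumes "subvariety U V"
  shows "Cn U G n x \<le> Cn V G n x"
proof (induction n arbitrary: x)
  case 0
  obtain i p j where "x = (i, p, j)"
    by (cases x) auto
  then show ?case
    using word_equiv_subvariety[OF assms]
    by (auto simp: C0_def sg_Inter_eq_Inf intro!: Inf_mono)
next
  case (Suc n)
  have "sg_Union ((\<lambda>y. sg_comp G (Cn U G n y) (fst y)) ` set ys)
      \<le> sg_Union ((\<lambda>y. sg_comp G (Cn V G n y) (fst y)) ` set ys)" for ys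
    unfolding sg_Union_eq_Sup by (intro SUP_mono' sg_comp_mono Suc.IH)
  with factorization_subvariety[OF assms] show ?case
    unfolding Cn.simps sg_Inter_eq_Inf by (intro Inf_mono) blast
qed

lemma Pinf_subvariety_le:
  assumes "subvariety U V"
  shows "Pinf U G x \<le> Pinf V G x"
  unfolding Pinf_def Pn_def sg_Inter_eq_Inf
  by (intro INF_mono' sg_comp_mono Cn_subvariety_le[OF assms])

lemma property_P_subvariety:
  assumes "subvariety U V" and "property_P U G"
  shows "property_P V G"
  using assms(2) Pinf_subvariety_le[OF assms(1)]
  by (fastforce simp: property_P_def less_eq_prod_def)

theorem lemma2p4:
  fixes U V :: laws and G :: "('v, 'e) pre_digraph"
  assumes "group_variety U" and "group_variety V" and "subvariety U V"
    and "fin_digraph G" and "connected G"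
    and "property_P U G"
  shows "property_P V G"
  using assms(3,6) by (rule property_P_subvariety)

end
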